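(* Let $f,g:\mathbb{C}\to\mathbb{C}$ be entire functions with $f\circ g=g\circ f$, and suppose that $f$ and $g$ satisfy Property A. Then the escaping set $I(f)$ is completely invariant under $g$, and the escaping set $I(g)$ is completely invariant under $f$.
   Context: For an entire function $h$, $h^n$ denotes the $n$-th iterate. The escaping set is $I(h)=\{z\in\mathbb{C}: h^n(z)\to\infty \text{ as } n\to\infty\}$. A set $A\subseteq\mathbb{C}$ is completely invariant under a map $\phi$ if $\phi(A)\subseteq A$ and $\phi^{-1}(A)\subseteq A$. Property A for the pair $(f,g)$: for every $z\in\mathbb{C}$ and every strictly increasing sequence $(n_k)$ of natural numbers with $|f^{n_k}(z)|\to\infty$, one has $|g(f^{n_k}(z))|\to\infty$; and symmetrically, for every $z\in\mathbb{C}$ and every strictly increasing $(n_k)$ with $|g^{n_k}(z)|\to\infty$, one has $|f(g^{n_k}(z))|\to\infty$. (Informally: each of $f,g$ sends points of orbits escaping under the other function to $\infty$.) *)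

theory Defs
  imports "HOL-Complex_Analysis.Complex_Analysis"
begin

definition escaping_set :: "(complex \<Rightarrow> complex) \<Rightarrow> complex set" where
  "escaping_set h = {z. filterlim (\<lambda>n. (h ^^ n) z) at_infinity sequentially}"

definition completely_invariant :: "complex set \<Rightarrow> (complex \<Rightarrow> complex) \<Rightarrow> bool" where
  "completely_invariant A \<phi> \<longleftrightarrow> \<phi> ` A \<subseteq> A \<and> \<phi> -` A \<subseteq> A"

definition property_A :: "(complex \<Rightarrow> complex) \<Rightarrow> (complex \<Rightarrow> complex) \<Rightarrow> bool" where
  "property_A f g \<longleftrightarrow>
     (\<forall>z (nk::nat \<Rightarrow> nat). strict_mono nk \<longrightarrow>
        filterlim (\<lambda>k. norm ((f ^^ nk k) z)) at_top sequentially \<longrightarrow>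
        filterlim (\<lambda>k. norm (g ((f ^^ nk k) z))) at_top sequentially) \<and>
     (\<forall>z (nk::nat \<Rightarrow> nat). strict_mono nk \<longrightarrow>
        filterlim (\<lambda>k. norm ((g ^^ nk k) z)) at_top sequentially \<longrightarrow>
        filterlim (\<lambda>k. norm (f ((g ^^ nk k) z))) at_top sequentially)"

end

theory Submission
  imports Defs
begin

text \<open>Forward invariance is Property A applied to the full sequence of iterates, since
  \<open>g\<close> commutes with every \<open>f\<^sup>n\<close>. Backward invariance needs only continuity of \<open>g\<close>:
  \<open>g\<close> is bounded on bounded sets, so an orbit whose \<open>g\<close>-image escapes must escape itself.\<close>

lemma funpow_commute_apply:
  assumes "f \<circ> g = g \<circ> f"
  shows "(f ^^ n) (g x) = g ((f ^^ n) x)"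
proof (induction n)
  case (Suc n)
  have "f (g y) = g (f y)" for y
    using assms by (metis comp_apply)
  with Suc show ?case by simp
qed simp

lemma filterlim_at_infinity_of_continuous_image:
  fixes g :: "'a::{real_normed_vector, heine_borel} \<Rightarrow> 'b::real_normed_vector"
  assumes "continuous_on UNIV g"
    and "filterlim (\<lambda>n. g (s n)) at_infinity F"
  shows "filterlim s at_infinity F"
  unfolding filterlim_at_infinity_conv_norm_at_top filterlim_at_top
proof
  fix B :: real
  have "compact (g ` cball 0 B)"
    by (rule compact_continuous_image) (use assms(1) continuous_on_subset in auto)
  then obtain M where M: "\<And>x. x \<in> cball 0 B \<Longrightarrow> norm (g x) \<le> M"
    using compact_imp_bounded bounded_iff by (metis imageI)
  from assms(2) have "eventually (\<lambda>n. M + 1 \<le> norm (g (s n))) F"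
    unfolding filterlim_at_infinity_conv_norm_at_top filterlim_at_top by auto
  then show "eventually (\<lambda>n. B \<le> norm (s n)) F"
  proof (rule eventually_mono)
    fix n assume "M + 1 \<le> norm (g (s n))"
    then have "s n \<notin> cball 0 B" using M by force
    then show "B \<le> norm (s n)" by simp
  qed
qed

lemma escaping_set_iff_norm:
  "z \<in> escaping_set h \<longleftrightarrow> filterlim (\<lambda>n. norm ((h ^^ n) z)) at_top sequentially"
  unfolding escaping_set_def filterlim_at_infinity_conv_norm_at_top by simp

lemma image_escaping_set_subset:
  assumes "f \<circ> g = g \<circ> f"
    and "\<And>z. filterlim (\<lambda>n. norm ((f ^^ n) z)) at_top sequentially \<Longrightarrow>
           filterlim (\<lambda>n. norm (g ((f ^^ n) z))) at_top sequentially"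
  shows "g ` escaping_set f \<subseteq> escaping_set f"
  using assms by (auto simp: escaping_set_iff_norm funpow_commute_apply)

lemma vimage_escaping_set_subset:
  assumes "continuous_on UNIV g" and "f \<circ> g = g \<circ> f"
  shows "g -` escaping_set f \<subseteq> escaping_set f"
proof
  fix z assume "z \<in> g -` escaping_set f"
  then have "filterlim (\<lambda>n. g ((f ^^ n) z)) at_infinity sequentially"
    unfolding escaping_set_def by (simp add: funpow_commute_apply[OF assms(2)])
  then show "z \<in> escaping_set f"
    unfolding escaping_set_def
    using filterlim_at_infinity_of_continuous_image[OF assms(1)] by simp
qed

lemma completely_invariant_escaping_set:
  assumes "continuous_on UNIV g" and "f \<circ> g = g \<circ> f"
    and "\<And>z. filterlim (\<lambda>n. norm ((f ^^ n) z)) at_top sequentially \<Longrightarrow>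
           filterlim (\<lambda>n. norm (g ((f ^^ n) z))) at_top sequentially"
  shows "completely_invariant (escaping_set f) g"
  unfolding completely_invariant_def
  using image_escaping_set_subset[OF assms(2,3)] vimage_escaping_set_subset[OF assms(1,2)]
  by blast

theorem mainTheorem1:
  fixes f g :: "complex \<Rightarrow> complex"
  assumes "f holomorphic_on UNIV" and "g holomorphic_on UNIV"
    and "f \<circ> g = g \<circ> f"
    and "property_A f g"
  shows "completely_invariant (escaping_set f) g \<and> completely_invariant (escaping_set g) f"
proof
  have f_escapes_under_g: "filterlim (\<lambda>n. norm (g ((f ^^ n) z))) at_top sequentially"
    if "filterlim (\<lambda>n. norm ((f ^^ n) z)) at_top sequentially" for z
    using assms(4) that strict_mono_id unfolding property_A_def id_def by blast
  have g_escapes_under_f: "filterlim (\<lambda>n. norm (f ((g ^^ n) z))) at_top sequentially"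
    if "filterlim (\<lambda>n. norm ((g ^^ n) z)) at_top sequentially" for z
    using assms(4) that strict_mono_id unfolding property_A_def id_def by blast
  show "completely_invariant (escaping_set f) g"
    by (rule completely_invariant_escaping_set)
      (use assms(2,3) holomorphic_on_imp_continuous_on f_escapes_under_g in auto)
  show "completely_invariant (escaping_set g) f"
    by (rule completely_invariant_escaping_set)
      (use assms(1,3) holomorphic_on_imp_continuous_on g_escapes_under_f in auto)
qed

end
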